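(* $$\mathcal{I}_1\le\frac{4}{n^2}\cdot\frac{\phi_{\max}}{\phi_{\min}}.$$
   Context: Fix a prompt $x$, a countable response space, full-support conditional distributions $\pi_{\mathrm{target}},\pi_{\mathrm{gen}}$, a reward $r$, $\beta>0$, and $n\ge1$. Let $\phi_\beta(y|x)=\frac{\pi_{\mathrm{target}}(y|x)}{\pi_{\mathrm{gen}}(y|x)}e^{\beta r(y|x)}$, $\phi_{\max}=\max_{x,y}\phi_\beta(y|x)$, $\phi_{\min}=\min_{x,y}\phi_\beta(y|x)$, and $\Phi_\beta(s)=\mathbb{E}_{Y\sim\pi_{\mathrm{gen}}(\cdot|x)}[e^{-s\phi_\beta(Y|x)}]$ for $s\ge0$. Let $p_n=\log(n^4)/n$, $\mathcal{R}_1=\{(s_1,s_2)\in[0,\infty)^2:\min\{\Phi_\beta(s_1),\Phi_\beta(s_2)\}\le1-p_n\}$ and $$\mathcal{I}_1=\frac{1}{1-e^{-n}}\int_{\mathcal{R}_1}\big(n^2\Phi_\beta(s_1)\Phi_\beta(s_2)+n\big)\big(-\Phi_\beta'(0)\big)\big(-\Phi_\beta'(s_1+s_2)\big)\exp\big(n[\Phi_\beta(s_1)\Phi_\beta(s_2)-1]\big)\,ds_1\,ds_2.$$ *)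

theory Defs
  imports "HOL-Analysis.Analysis" "HOL-Library.Countable"
begin

definition phi_beta :: "('x \<Rightarrow> 'y \<Rightarrow> real) \<Rightarrow> ('x \<Rightarrow> 'y \<Rightarrow> real) \<Rightarrow> ('x \<Rightarrow> 'y \<Rightarrow> real) \<Rightarrow> real \<Rightarrow> 'x \<Rightarrow> 'y \<Rightarrow> real" where
  "phi_beta pt pg r \<beta> x y = pt x y / pg x y * exp (\<beta> * r x y)"

text \<open>phi_max = max over (x,y), phi_min = min over (x,y) (existence of the extrema is assumed in the theorem)\<close>
definition phi_max where
  "phi_max pt pg r \<beta> = (SUP xy. phi_beta pt pg r \<beta> (fst xy) (snd xy))"
definition phi_min where
  "phi_min pt pg r \<beta> = (INF xy. phi_beta pt pg r \<beta> (fst xy) (snd xy))"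

definition Phi_beta :: "('x \<Rightarrow> 'y \<Rightarrow> real) \<Rightarrow> ('x \<Rightarrow> 'y \<Rightarrow> real) \<Rightarrow> ('x \<Rightarrow> 'y \<Rightarrow> real) \<Rightarrow> real \<Rightarrow> 'x \<Rightarrow> real \<Rightarrow> real" where
  "Phi_beta pt pg r \<beta> x s = (\<Sum>\<^sub>\<infinity>y. pg x y * exp (- s * phi_beta pt pg r \<beta> x y))"

definition p_n :: "nat \<Rightarrow> real" where
  "p_n n = ln (real n ^ 4) / real n"

definition R1 :: "(real \<Rightarrow> real) \<Rightarrow> nat \<Rightarrow> (real \<times> real) set" where
  "R1 Phi n = {(s1, s2). 0 \<le> s1 \<and> 0 \<le> s2 \<and> min (Phi s1) (Phi s2) \<le> 1 - p_n n}"

text \<open>I_1, as an extended nonnegative real (the integrand is nonnegative; a non-integrable integrand gives \<infinity>)\<close>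
definition I1 :: "(real \<Rightarrow> real) \<Rightarrow> nat \<Rightarrow> ennreal" where
  "I1 Phi n = ennreal (1 / (1 - exp (- real n))) *
     (\<integral>\<^sup>+ p. ennreal (indicator (R1 Phi n) p *
        ((real n ^ 2 * Phi (fst p) * Phi (snd p) + real n) * (- deriv Phi 0) *
         (- deriv Phi (fst p + snd p)) * exp (real n * (Phi (fst p) * Phi (snd p) - 1)))) \<partial>lborel)"

end

(* On R1 the product Phi(s1) Phi(s2) is at most min (Phi s1) (Phi s2) <= 1 - p_n, so the
   exponential factor is at most exp (- n p_n) = n^-4, while the polynomial factor is at most
   n^2 + n; with 1 / (1 - e^-n) <= 2 this yields the factor 4 / n^2.  What remains is
   g(0) times the integral of g(s1 + s2) over the quadrant, where
   g = - Phi' = sum_y pi_gen(y) phi(y) exp (- s phi(y)).  Integrating termwise gives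
   g(0) * sum_y pi_gen(y) / phi(y) <= phi_max / phi_min. *)
theory Submission
  imports Defs
begin

lemma summable_on_mult_bounded:
  fixes p f :: "'y \<Rightarrow> real"
  assumes "\<And>y. 0 \<le> p y" and "p summable_on UNIV" and "\<And>y. \<bar>f y\<bar> \<le> B"
  shows "(\<lambda>y. norm (p y * f y)) summable_on UNIV" and "(\<lambda>y. p y * f y) summable_on UNIV"
proof -
  have "(\<lambda>y. p y * B) summable_on UNIV"
    using assms(2) by (rule summable_on_cmult_left)
  then show "(\<lambda>y. norm (p y * f y)) summable_on UNIV"
    by (rule summable_on_comparison_test) (use assms in \<open>auto simp: abs_mult intro: mult_left_mono\<close>)
  then show "(\<lambda>y. p y * f y) summable_on UNIV"
    by (rule abs_summable_summable)
qed

lemma abs_infsum_mult_le: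
  fixes p f :: "'y \<Rightarrow> real"
  assumes p0: "\<And>y. 0 \<le> p y" and p_sum: "p summable_on UNIV" and f_le: "\<And>y. \<bar>f y\<bar> \<le> B"
  shows "\<bar>\<Sum>\<^sub>\<infinity>y. p y * f y\<bar> \<le> B * (\<Sum>\<^sub>\<infinity>y. p y)"
proof -
  have abs_sum: "(\<lambda>y. norm (p y * f y)) summable_on UNIV"
    by (rule summable_on_mult_bounded(1)[OF p0 p_sum f_le])
  have "\<bar>\<Sum>\<^sub>\<infinity>y. p y * f y\<bar> \<le> (\<Sum>\<^sub>\<infinity>y. \<bar>p y * f y\<bar>)"
    using norm_infsum_bound[OF abs_sum] by simp
  also have "\<dots> \<le> (\<Sum>\<^sub>\<infinity>y. B * p y)"
    by (rule infsum_mono[OF abs_sum[unfolded real_norm_def] summable_on_cmult_right[OF p_sum]])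
      (use p0 f_le in \<open>auto simp: abs_mult mult.commute[of B] intro: mult_left_mono\<close>)
  also have "\<dots> = B * (\<Sum>\<^sub>\<infinity>y. p y)"
    by (rule infsum_cmult_right')
  finally show ?thesis .
qed

lemma ennreal_infsum_eq_nn_integral:
  fixes f :: "'y \<Rightarrow> real"
  assumes "\<And>y. 0 \<le> f y" and "f summable_on UNIV"
  shows "ennreal (\<Sum>\<^sub>\<infinity>y. f y) = (\<integral>\<^sup>+y. ennreal (f y) \<partial>count_space UNIV)"
proof -
  have "Infinite_Set_Sum.abs_summable_on f UNIV"
    using assms abs_summable_equivalent[of f UNIV] by simp
  then show ?thesis
    using nn_integral_conv_infsetsum infsetsum_infsum assms(1) by metis
qed

lemma abs_exp_minus_one_minus_le:
  fixes x :: real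
  shows "\<bar>exp x - 1 - x\<bar> \<le> x\<^sup>2 * exp \<bar>x\<bar>"
proof -
  obtain t where t: "\<bar>t\<bar> \<le> \<bar>x\<bar>" and exp_x: "exp x = 1 + x + exp t / 2 * x\<^sup>2"
    using Maclaurin_exp_le[of x 2] by (auto simp: numeral_2_eq_2)
  have "x\<^sup>2 * exp t \<le> x\<^sup>2 * exp \<bar>x\<bar>"
    using t by (intro mult_left_mono) auto
  moreover have "\<bar>exp x - 1 - x\<bar> = x\<^sup>2 * exp t / 2"
    unfolding exp_x by simp
  moreover have "0 \<le> x\<^sup>2 * exp t"
    by simp
  ultimately show ?thesis
    by linarith
qed

lemma exp_minus_mult_le:
  fixes a t M :: real
  assumes "\<bar>a\<bar> \<le> M"
  shows "exp (- t * a) \<le> exp (\<bar>t\<bar> * M)"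
proof -
  have "- t * a \<le> \<bar>t\<bar> * \<bar>a\<bar>"
    by (metis abs_ge_minus_self abs_mult mult_minus_left)
  also have "\<dots> \<le> \<bar>t\<bar> * M"
    using assms by (simp add: mult_left_mono)
  finally show ?thesis
    by simp
qed

lemma abs_exp_first_order_remainder_le:
  fixes a s h M :: real
  assumes a: "\<bar>a\<bar> \<le> M" and h: "\<bar>h\<bar> \<le> 1"
  shows "\<bar>exp (- s * a) * (exp (- h * a) - 1 - - h * a)\<bar> \<le> exp ((\<bar>s\<bar> + 1) * M) * M\<^sup>2 * h\<^sup>2"
proof -
  have "0 \<le> M"
    using a by linarith
  have small: "\<bar>- h * a\<bar> \<le> M"
    using mult_mono[of "\<bar>h\<bar>" 1 "\<bar>a\<bar>" M] h a \<open>0 \<le> M\<close> by (simp add: abs_mult)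
  have "a\<^sup>2 \<le> M\<^sup>2"
    using a by (metis abs_ge_zero power2_abs power_mono)
  then have "(- h * a)\<^sup>2 * exp \<bar>- h * a\<bar> \<le> (h\<^sup>2 * M\<^sup>2) * exp M"
    using small by (intro mult_mono) (auto simp: power_mult_distrib mult_left_mono)
  then have "\<bar>exp (- h * a) - 1 - - h * a\<bar> \<le> h\<^sup>2 * M\<^sup>2 * exp M"
    using abs_exp_minus_one_minus_le[of "- h * a"] by linarith
  moreover have "exp (- s * a) \<le> exp (\<bar>s\<bar> * M)"
    by (rule exp_minus_mult_le[OF a])
  ultimately have "exp (- s * a) * \<bar>exp (- h * a) - 1 - - h * a\<bar> \<le> exp (\<bar>s\<bar> * M) * (h\<^sup>2 * M\<^sup>2 * exp M)"
    by (intro mult_mono) auto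
  also have "\<dots> = exp (\<bar>s\<bar> * M + M) * M\<^sup>2 * h\<^sup>2"
    by (simp add: exp_add mult_ac)
  also have "\<dots> = exp ((\<bar>s\<bar> + 1) * M) * M\<^sup>2 * h\<^sup>2"
    by (simp add: distrib_right)
  finally show ?thesis
    by (simp add: abs_mult)
qed

lemma has_field_derivative_of_quadratic_remainder:
  fixes f :: "real \<Rightarrow> real"
  assumes "0 < \<delta>"
    and remainder: "\<And>h. \<bar>h\<bar> \<le> \<delta> \<Longrightarrow> \<bar>f (x + h) - f x - h * D\<bar> \<le> C * h\<^sup>2"
  shows "(f has_field_derivative D) (at x)"
proof -
  have "((\<lambda>h. (f (x + h) - f x) / h - D) \<longlongrightarrow> 0) (at 0)"
  proof (rule Lim_null_comparison)
    have "\<bar>(f (x + h) - f x) / h - D\<bar> \<le> C * \<bar>h\<bar>" if "h \<noteq> 0" "\<bar>h\<bar> < \<delta>" for h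
    proof -
      have "(f (x + h) - f x) / h - D = (f (x + h) - f x - h * D) / h"
        using \<open>h \<noteq> 0\<close> by (simp add: field_simps)
      then show ?thesis
        using remainder[of h] that by (simp add: abs_divide divide_le_eq power2_eq_square mult.assoc)
    qed
    then show "\<forall>\<^sub>F h in at 0. norm ((f (x + h) - f x) / h - D) \<le> C * \<bar>h\<bar>"
      unfolding eventually_at using \<open>0 < \<delta>\<close> by (auto simp: dist_real_def)
    show "((\<lambda>h. C * \<bar>h\<bar>) \<longlongrightarrow> 0) (at 0)"
      by (intro tendsto_eq_intros) auto
  qed
  then show ?thesis
    unfolding DERIV_def by (subst Lim_null) simp
qed

definition laplace_sum :: "('y \<Rightarrow> real) \<Rightarrow> ('y \<Rightarrow> real) \<Rightarrow> real \<Rightarrow> real" where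
  "laplace_sum p \<phi> s = (\<Sum>\<^sub>\<infinity>y. p y * exp (- s * \<phi> y))"

lemma summable_on_laplace_terms:
  fixes p \<phi> :: "'y \<Rightarrow> real"
  assumes "\<And>y. 0 \<le> p y" and "p summable_on UNIV" and "\<And>y. \<bar>\<phi> y\<bar> \<le> M"
  shows "(\<lambda>y. p y * exp (- s * \<phi> y)) summable_on UNIV"
proof (rule summable_on_mult_bounded(2)[OF assms(1,2)])
  show "\<bar>exp (- s * \<phi> y)\<bar> \<le> exp (\<bar>s\<bar> * M)" for y
    using exp_minus_mult_le[OF assms(3)] by simp
qed

lemma laplace_sum_0: "laplace_sum p \<phi> 0 = (\<Sum>\<^sub>\<infinity>y. p y)"
  by (simp add: laplace_sum_def)

lemma laplace_sum_nonneg: "(\<And>y. 0 \<le> p y) \<Longrightarrow> 0 \<le> laplace_sum p \<phi> s"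
  unfolding laplace_sum_def by (intro infsum_nonneg) simp

lemma laplace_sum_le:
  assumes "\<And>y. 0 \<le> p y" and "p summable_on UNIV" and "\<And>y. 0 \<le> \<phi> y" and "0 \<le> s"
  shows "laplace_sum p \<phi> s \<le> (\<Sum>\<^sub>\<infinity>y. p y)"
proof -
  have "\<bar>laplace_sum p \<phi> s\<bar> \<le> 1 * (\<Sum>\<^sub>\<infinity>y. p y)"
    unfolding laplace_sum_def
    by (rule abs_infsum_mult_le) (use assms in auto)
  then show ?thesis
    by simp
qed

lemma laplace_sum_weighted_0_le:
  fixes p \<phi> :: "'y \<Rightarrow> real"
  assumes "\<And>y. 0 \<le> p y" and "p summable_on UNIV" and "\<And>y. \<bar>\<phi> y\<bar> \<le> M"
  shows "laplace_sum (\<lambda>y. p y * \<phi> y) \<phi> 0 \<le> M * (\<Sum>\<^sub>\<infinity>y. p y)"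
  using abs_infsum_mult_le[where f = \<phi>, OF assms] by (simp add: laplace_sum_0)

lemma has_field_derivative_laplace_sum:
  fixes p \<phi> :: "'y \<Rightarrow> real"
  assumes p0: "\<And>y. 0 \<le> p y" and p_sum: "p summable_on UNIV" and \<phi>_le: "\<And>y. \<bar>\<phi> y\<bar> \<le> M"
  shows "(laplace_sum p \<phi> has_field_derivative - laplace_sum (\<lambda>y. p y * \<phi> y) \<phi> s) (at s)"
proof (rule has_field_derivative_of_quadratic_remainder)
  let ?S = "laplace_sum p \<phi>" and ?D = "laplace_sum (\<lambda>y. p y * \<phi> y) \<phi> s"
  fix h :: real
  assume h: "\<bar>h\<bar> \<le> 1"
  have "0 \<le> M"
    using \<phi>_le[of undefined] by linarith
  have "(\<lambda>y. p y * (\<phi> y * exp (- s * \<phi> y))) summable_on UNIV"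
  proof (rule summable_on_mult_bounded(2)[OF p0 p_sum])
    fix y
    show "\<bar>\<phi> y * exp (- s * \<phi> y)\<bar> \<le> M * exp (\<bar>s\<bar> * M)"
      unfolding abs_mult using \<phi>_le[of y] exp_minus_mult_le[OF \<phi>_le, of s y] \<open>0 \<le> M\<close>
      by (intro mult_mono) auto
  qed
  then have "((\<lambda>y. p y * exp (- (s + h) * \<phi> y) + - (p y * exp (- s * \<phi> y))
        + h * (p y * (\<phi> y * exp (- s * \<phi> y)))) has_sum (?S (s + h) + - ?S s + h * ?D)) UNIV"
    unfolding laplace_sum_def
    by (intro has_sum_add has_sum_uminusI has_sum_cmult_right has_sum_infsum
        summable_on_laplace_terms[OF p0 p_sum \<phi>_le]) (simp add: mult.assoc)
  then have remainder_sum: "?S (s + h) - ?S s - h * - ?D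
      = (\<Sum>\<^sub>\<infinity>y. p y * (exp (- s * \<phi> y) * (exp (- h * \<phi> y) - 1 - - h * \<phi> y)))"
    by (auto dest!: infsumI intro: infsum_cong simp: algebra_simps simp flip: exp_add)
  have "\<bar>?S (s + h) - ?S s - h * - ?D\<bar>
      \<le> exp ((\<bar>s\<bar> + 1) * M) * M\<^sup>2 * h\<^sup>2 * (\<Sum>\<^sub>\<infinity>y. p y)"
    unfolding remainder_sum
    by (rule abs_infsum_mult_le[OF p0 p_sum abs_exp_first_order_remainder_le[OF \<phi>_le h]])
  then show "\<bar>?S (s + h) - ?S s - h * - ?D\<bar>
      \<le> exp ((\<bar>s\<bar> + 1) * M) * M\<^sup>2 * (\<Sum>\<^sub>\<infinity>y. p y) * h\<^sup>2"
    by (simp add: mult_ac)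
qed (simp)

lemma borel_measurable_laplace_sum:
  fixes p \<phi> :: "'y \<Rightarrow> real"
  assumes "\<And>y. 0 \<le> p y" and "p summable_on UNIV" and "\<And>y. \<bar>\<phi> y\<bar> \<le> M"
  shows "laplace_sum p \<phi> \<in> borel_measurable borel"
  using DERIV_isCont[OF has_field_derivative_laplace_sum[where \<phi> = \<phi>, OF assms]]
  by (intro borel_measurable_continuous_onI continuous_at_imp_continuous_on) blast

lemma borel_measurable_quadrant_sum:
  fixes f :: "real \<Rightarrow> real"
  assumes [measurable]: "f \<in> borel_measurable borel"
  shows "(\<lambda>q. ennreal (indicator ({0..} \<times> {0..}) q * f (fst q + snd q))) \<in> borel_measurable lborel"
proof -
  have "(\<lambda>q. ennreal (indicator ({0..} \<times> {0..}) q * f (fst q + snd q)))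
      \<in> borel_measurable (lborel \<Otimes>\<^sub>M lborel)"
    by measurable
  then show ?thesis
    by (simp add: lborel_prod)
qed

lemma nn_integral_exp_halfline:
  fixes l :: real
  assumes "0 < l"
  shows "(\<integral>\<^sup>+x. ennreal (indicator {0..} x * exp (- l * x)) \<partial>lborel) = ennreal (1 / l)"
  using nn_integral_has_integral_lebesgue[OF _ has_integral_exp_minus_to_infinity[OF assms, of 0]]
  by simp

lemma nn_integral_exp_quadrant:
  fixes l :: real
  assumes "0 < l"
  shows "(\<integral>\<^sup>+q. ennreal (indicator ({0..} \<times> {0..}) q * exp (- (fst q + snd q) * l)) \<partial>lborel)
       = ennreal (1 / l\<^sup>2)"
proof -
  let ?e = "\<lambda>x::real. ennreal (indicator {0..} x * exp (- l * x))"
  have "(\<integral>\<^sup>+q. ennreal (indicator ({0..} \<times> {0..}) q * exp (- (fst q + snd q) * l)) \<partial>lborel)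
      = (\<integral>\<^sup>+q. ?e (fst q) * ?e (snd q) \<partial>(lborel \<Otimes>\<^sub>M lborel))"
    by (auto simp: lborel_prod indicator_times algebra_simps ennreal_mult'[symmetric] simp flip: exp_add
        intro!: nn_integral_cong)
  also have "\<dots> = (\<integral>\<^sup>+x. \<integral>\<^sup>+y. ?e x * ?e y \<partial>lborel \<partial>lborel)"
  proof -
    have "(\<lambda>q. ?e (fst q) * ?e (snd q)) \<in> borel_measurable (lborel \<Otimes>\<^sub>M lborel)"
      by measurable
    from lborel.nn_integral_fst[OF this] show ?thesis
      by simp
  qed
  also have "\<dots> = (\<integral>\<^sup>+x. ?e x * ennreal (1 / l) \<partial>lborel)"
    by (subst nn_integral_cmult) (measurable, simp only: nn_integral_exp_halfline[OF assms])
  also have "\<dots> = ennreal (1 / l) * ennreal (1 / l)"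
    by (subst nn_integral_multc) (measurable, simp only: nn_integral_exp_halfline[OF assms])
  also have "\<dots> = ennreal (1 / l\<^sup>2)"
    using assms by (simp add: ennreal_mult'[symmetric] power2_eq_square)
  finally show ?thesis .
qed

lemma nn_integral_quadrant_laplace_sum:
  fixes p \<phi> :: "'y::countable \<Rightarrow> real"
  assumes p0: "\<And>y. 0 \<le> p y" and p_sum: "p summable_on UNIV"
    and \<phi>_pos: "\<And>y. 0 < \<phi> y" and \<phi>_le: "\<And>y. \<phi> y \<le> M"
  shows "(\<integral>\<^sup>+q. ennreal (indicator ({0..} \<times> {0..}) q *
      laplace_sum (\<lambda>y. p y * \<phi> y) \<phi> (fst q + snd q)) \<partial>lborel)
       = (\<integral>\<^sup>+y. ennreal (p y / \<phi> y) \<partial>count_space UNIV)"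
proof -
  let ?Q = "{0..} \<times> {0..} :: (real \<times> real) set"
  let ?F = "\<lambda>y q. ennreal (indicator ?Q q * (p y * \<phi> y * exp (- (fst q + snd q) * \<phi> y)))"
  have \<phi>_abs: "\<bar>\<phi> y\<bar> \<le> M" for y
    using \<phi>_pos[of y] \<phi>_le[of y] by simp
  have weights0: "0 \<le> p y * \<phi> y" for y
    using p0[of y] \<phi>_pos[of y] by simp
  have weights: "(\<lambda>y. p y * \<phi> y) summable_on UNIV"
    by (rule summable_on_mult_bounded(2)[OF p0 p_sum \<phi>_abs])
  have terms: "(\<lambda>y. p y * \<phi> y * exp (- s * \<phi> y)) summable_on UNIV" for s
    by (rule summable_on_laplace_terms[where p = "\<lambda>y. p y * \<phi> y"]) (use weights0 weights \<phi>_abs in auto)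
  have pointwise: "ennreal (indicator ?Q q * laplace_sum (\<lambda>y. p y * \<phi> y) \<phi> (fst q + snd q))
      = (\<integral>\<^sup>+y. ?F y q \<partial>count_space UNIV)" for q
  proof -
    have "indicator ?Q q * laplace_sum (\<lambda>y. p y * \<phi> y) \<phi> (fst q + snd q)
        = (\<Sum>\<^sub>\<infinity>y. indicator ?Q q * (p y * \<phi> y * exp (- (fst q + snd q) * \<phi> y)))"
      unfolding laplace_sum_def by (rule infsum_cmult_right'[symmetric])
    also have "ennreal \<dots> = (\<integral>\<^sup>+y. ?F y q \<partial>count_space UNIV)"
      by (rule ennreal_infsum_eq_nn_integral)
        (simp add: weights0, rule summable_on_cmult_right[OF terms])
    finally show ?thesis .
  qed
  have "(\<integral>\<^sup>+q. ennreal (indicator ?Q q * laplace_sum (\<lambda>y. p y * \<phi> y) \<phi> (fst q + snd q))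
      \<partial>lborel)
      = (\<integral>\<^sup>+q. \<integral>\<^sup>+y. ?F y q \<partial>count_space UNIV \<partial>lborel)"
    by (simp only: pointwise)
  \<comment> \<open>Tonelli; afterwards the term of y contributes p y * \<phi> y / \<phi> y ^ 2.\<close>
  also have "\<dots> = (\<integral>\<^sup>+y. \<integral>\<^sup>+q. ?F y q \<partial>lborel \<partial>count_space UNIV)"
  proof (rule nn_integral_count_space_nn_integral)
    show "?F y \<in> borel_measurable lborel" for y
      by (rule borel_measurable_quadrant_sum[of "\<lambda>t. p y * \<phi> y * exp (- t * \<phi> y)"]) measurable
  qed simp
  also have "\<dots> = (\<integral>\<^sup>+y. ennreal (p y / \<phi> y) \<partial>count_space UNIV)"
  proof (rule nn_integral_cong)
    fix y
    let ?E = "\<lambda>q. ennreal (indicator ?Q q * exp (- (fst q + snd q) * \<phi> y))"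
    have E_meas: "?E \<in> borel_measurable lborel"
      by (rule borel_measurable_quadrant_sum[of "\<lambda>t. exp (- t * \<phi> y)"]) measurable
    have "(\<integral>\<^sup>+q. ?F y q \<partial>lborel) = (\<integral>\<^sup>+q. ennreal (p y * \<phi> y) * ?E q \<partial>lborel)"
      by (intro nn_integral_cong) (simp only: ennreal_mult'[OF weights0[of y], symmetric], simp add: mult_ac)
    also have "\<dots> = ennreal (p y * \<phi> y) * (\<integral>\<^sup>+q. ?E q \<partial>lborel)"
      by (rule nn_integral_cmult[OF E_meas])
    also have "\<dots> = ennreal (p y / \<phi> y)"
      using \<phi>_pos[of y] weights0[of y] unfolding nn_integral_exp_quadrant[OF \<phi>_pos[of y]]
      by (simp add: ennreal_mult'[symmetric] power2_eq_square)
    finally show "(\<integral>\<^sup>+q. ?F y q \<partial>lborel) = ennreal (p y / \<phi> y)" .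
  qed
  finally show ?thesis .
qed

lemma nn_integral_quadrant_laplace_sum_le:
  fixes p \<phi> :: "'y::countable \<Rightarrow> real"
  assumes p0: "\<And>y. 0 \<le> p y" and p_dist: "(p has_sum 1) UNIV"
    and \<phi>_ge: "\<And>y. m \<le> \<phi> y" and "0 < m" and \<phi>_le: "\<And>y. \<phi> y \<le> M"
  shows "(\<integral>\<^sup>+q. ennreal (indicator ({0..} \<times> {0..}) q *
      laplace_sum (\<lambda>y. p y * \<phi> y) \<phi> (fst q + snd q)) \<partial>lborel)
       \<le> ennreal (1 / m)"
proof -
  have p_sum: "p summable_on UNIV"
    using p_dist by (auto simp: summable_on_def)
  have \<phi>_pos: "0 < \<phi> y" for y
    using \<phi>_ge[of y] \<open>0 < m\<close> by linarith
  have "(\<integral>\<^sup>+q. ennreal (indicator ({0..} \<times> {0..}) q *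
      laplace_sum (\<lambda>y. p y * \<phi> y) \<phi> (fst q + snd q)) \<partial>lborel)
      = (\<integral>\<^sup>+y. ennreal (p y / \<phi> y) \<partial>count_space UNIV)"
    by (rule nn_integral_quadrant_laplace_sum[OF p0 p_sum \<phi>_pos \<phi>_le])
  also have "\<dots> \<le> (\<integral>\<^sup>+y. ennreal (1 / m * p y) \<partial>count_space UNIV)"
  proof (intro nn_integral_mono ennreal_leI)
    show "p y / \<phi> y \<le> 1 / m * p y" for y
      using divide_left_mono[OF \<phi>_ge[of y] p0[of y]] \<phi>_pos[of y] \<open>0 < m\<close> by simp
  qed
  also have "\<dots> = ennreal (\<Sum>\<^sub>\<infinity>y. 1 / m * p y)"
  proof (rule ennreal_infsum_eq_nn_integral[symmetric])
    show "0 \<le> 1 / m * p y" for y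
      using p0[of y] \<open>0 < m\<close> by simp
    show "(\<lambda>y. 1 / m * p y) summable_on UNIV"
      by (rule summable_on_cmult_right[OF p_sum])
  qed
  also have "\<dots> = ennreal (1 / m)"
    using infsum_cmult_right'[of "1 / m" p UNIV] infsumI[OF p_dist] by simp
  finally show ?thesis .
qed

lemma exp_minus_n_p_n:
  assumes "1 \<le> n"
  shows "exp (- real n * p_n n) = 1 / real n ^ 4"
  using assms by (simp add: p_n_def exp_minus inverse_eq_divide)

lemma I1_prefactor_le:
  assumes "1 \<le> n"
  shows "1 / (1 - exp (- real n)) * ((real n ^ 2 + real n) / real n ^ 4) \<le> 4 / real n ^ 2"
proof -
  have "exp (- real n) \<le> exp (- 1)"
    using assms by simp
  also have "\<dots> \<le> 1 / 2"
    using exp_ge_add_one_self[of 1] by (simp add: exp_minus divide_simps)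
  finally have "1 / (1 - exp (- real n)) \<le> 2"
    by (simp add: divide_le_eq)
  moreover have "(real n ^ 2 + real n) / real n ^ 4 \<le> 2 / real n ^ 2"
    using assms by (simp add: field_simps power_def)
  ultimately show ?thesis
    using mult_mono[of "1 / (1 - exp (- real n))" 2 "(real n ^ 2 + real n) / real n ^ 4" "2 / real n ^ 2"]
    by simp
qed

lemma R1_integrand_le:
  fixes Phi g :: "real \<Rightarrow> real"
  assumes n: "1 \<le> n" and Phi_01: "\<And>s. 0 \<le> s \<Longrightarrow> 0 \<le> Phi s \<and> Phi s \<le> 1"
    and deriv_Phi: "\<And>s. deriv Phi s = - g s" and g0: "\<And>s. 0 \<le> g s"
  shows "indicator (R1 Phi n) q *
      ((real n ^ 2 * Phi (fst q) * Phi (snd q) + real n) * (- deriv Phi 0) *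
       (- deriv Phi (fst q + snd q)) * exp (real n * (Phi (fst q) * Phi (snd q) - 1)))
    \<le> (real n ^ 2 + real n) / real n ^ 4 * g 0 * (indicator ({0..} \<times> {0..}) q * g (fst q + snd q))"
proof (cases "q \<in> R1 Phi n")
  case False
  then show ?thesis
    using g0 by simp
next
  case True
  then obtain s1 s2 where q: "q = (s1, s2)" and s1: "0 \<le> s1" and s2: "0 \<le> s2"
    and min_le: "min (Phi s1) (Phi s2) \<le> 1 - p_n n"
    by (auto simp: R1_def)
  define P where "P = Phi s1 * Phi s2"
  have "0 \<le> P" and "P \<le> 1"
    unfolding P_def using Phi_01[OF s1] Phi_01[OF s2] by (auto intro: mult_le_one)
  have "P \<le> Phi s1" and "P \<le> Phi s2"
    unfolding P_def using Phi_01[OF s1] Phi_01[OF s2] by (auto intro: mult_left_le mult_left_le_one_le)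
  with min_le have "P \<le> 1 - p_n n"
    by linarith
  then have "real n * (P - 1) \<le> real n * (- p_n n)"
    by (intro mult_left_mono) auto
  then have "exp (real n * (P - 1)) \<le> exp (- real n * p_n n)"
    by simp
  then have exp_le: "exp (real n * (P - 1)) \<le> 1 / real n ^ 4"
    unfolding exp_minus_n_p_n[OF n] .
  have "real n ^ 2 * P + real n \<le> real n ^ 2 + real n"
    using \<open>P \<le> 1\<close> by (simp add: mult_left_le)
  then have "(real n ^ 2 * P + real n) * (g 0 * g (s1 + s2)) * exp (real n * (P - 1))
      \<le> (real n ^ 2 + real n) * (g 0 * g (s1 + s2)) * (1 / real n ^ 4)"
    using exp_le g0 \<open>0 \<le> P\<close> by (intro mult_mono mult_nonneg_nonneg) auto
  then show ?thesis
    using True s1 s2 unfolding q P_def deriv_Phi by (simp add: mult_ac)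
qed

lemma I1_le:
  fixes Phi g :: "real \<Rightarrow> real"
  assumes n: "1 \<le> n" and Phi_01: "\<And>s. 0 \<le> s \<Longrightarrow> 0 \<le> Phi s \<and> Phi s \<le> 1"
    and deriv_Phi: "\<And>s. deriv Phi s = - g s" and g0: "\<And>s. 0 \<le> g s"
    and g_meas: "g \<in> borel_measurable borel"
    and J: "(\<integral>\<^sup>+q. ennreal (indicator ({0..} \<times> {0..}) q * g (fst q + snd q)) \<partial>lborel) \<le> ennreal J"
  shows "I1 Phi n \<le> ennreal (4 / real n ^ 2 * g 0 * J)"
proof -
  let ?a = "1 / (1 - exp (- real n))" and ?c = "(real n ^ 2 + real n) / real n ^ 4 * g 0"
  let ?G = "\<lambda>q. ennreal (indicator ({0..} \<times> {0..}) q * g (fst q + snd q))"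
  have "0 \<le> ?a"
    using n by (simp add: field_simps)
  have "0 \<le> ?c"
    using g0 by simp
  have G_meas: "?G \<in> borel_measurable lborel"
    by (rule borel_measurable_quadrant_sum[OF g_meas])
  have "ennreal (indicator (R1 Phi n) q *
      ((real n ^ 2 * Phi (fst q) * Phi (snd q) + real n) * (- deriv Phi 0) *
       (- deriv Phi (fst q + snd q)) * exp (real n * (Phi (fst q) * Phi (snd q) - 1))))
    \<le> ennreal ?c * ?G q" for q
    unfolding ennreal_mult'[OF \<open>0 \<le> ?c\<close>, symmetric]
    by (rule ennreal_leI[OF R1_integrand_le[OF n Phi_01 deriv_Phi g0]])
  then have "I1 Phi n \<le> ennreal ?a * (\<integral>\<^sup>+q. ennreal ?c * ?G q \<partial>lborel)"
    unfolding I1_def by (intro mult_left_mono nn_integral_mono) auto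
  also have "\<dots> = ennreal ?a * (ennreal ?c * (\<integral>\<^sup>+q. ?G q \<partial>lborel))"
    by (simp add: nn_integral_cmult[OF G_meas])
  also have "\<dots> \<le> ennreal ?a * (ennreal ?c * ennreal J)"
    using J by (intro mult_left_mono) auto
  also have "\<dots> = ennreal (?a * ?c) * ennreal J"
    by (simp only: ennreal_mult[OF \<open>0 \<le> ?a\<close> \<open>0 \<le> ?c\<close>] mult.assoc)
  also have "\<dots> \<le> ennreal (4 / real n ^ 2 * g 0) * ennreal J"
  proof -
    have "?a * ?c = ?a * ((real n ^ 2 + real n) / real n ^ 4) * g 0"
      by (simp only: mult.assoc)
    also have "\<dots> \<le> 4 / real n ^ 2 * g 0"
      by (rule mult_right_mono[OF I1_prefactor_le[OF n] g0])
    finally show ?thesis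
      by (intro mult_right_mono ennreal_leI) auto
  qed
  also have "\<dots> = ennreal (4 / real n ^ 2 * g 0 * J)"
    by (rule ennreal_mult'[symmetric]) (use g0 in simp)
  finally show ?thesis .
qed

lemma I1_laplace_sum_le:
  fixes p \<phi> :: "'y::countable \<Rightarrow> real"
  assumes n: "1 \<le> n" and p0: "\<And>y. 0 \<le> p y" and p_dist: "(p has_sum 1) UNIV"
    and \<phi>_ge: "\<And>y. m \<le> \<phi> y" and "0 < m" and \<phi>_le: "\<And>y. \<phi> y \<le> M"
  shows "I1 (laplace_sum p \<phi>) n \<le> ennreal (4 / real n ^ 2 * (M / m))"
proof -
  define g where "g = laplace_sum (\<lambda>y. p y * \<phi> y) \<phi>"
  have \<phi>_pos: "0 < \<phi> y" and \<phi>_abs: "\<bar>\<phi> y\<bar> \<le> M" for y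
    using \<phi>_ge[of y] \<phi>_le[of y] \<open>0 < m\<close> by auto
  have p_sum: "p summable_on UNIV" and p1: "(\<Sum>\<^sub>\<infinity>y. p y) = 1"
    using p_dist by (auto simp: summable_on_def infsumI)
  have weights0: "0 \<le> p y * \<phi> y" for y
    using p0[of y] \<phi>_pos[of y] by simp
  have weights: "(\<lambda>y. p y * \<phi> y) summable_on UNIV"
    by (rule summable_on_mult_bounded(2)[OF p0 p_sum \<phi>_abs])
  have "I1 (laplace_sum p \<phi>) n \<le> ennreal (4 / real n ^ 2 * g 0 * (1 / m))"
  proof (rule I1_le[OF n])
    show "0 \<le> laplace_sum p \<phi> s \<and> laplace_sum p \<phi> s \<le> 1" if "0 \<le> s" for s
      using laplace_sum_nonneg[OF p0] laplace_sum_le[OF p0 p_sum less_imp_le[OF \<phi>_pos] that] p1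
      by simp
    show "deriv (laplace_sum p \<phi>) s = - g s" for s
      unfolding g_def by (rule DERIV_imp_deriv[OF has_field_derivative_laplace_sum[OF p0 p_sum \<phi>_abs]])
    show "0 \<le> g s" for s
      unfolding g_def by (rule laplace_sum_nonneg[OF weights0])
    show "g \<in> borel_measurable borel"
      unfolding g_def by (rule borel_measurable_laplace_sum[OF weights0 weights \<phi>_abs])
    show "(\<integral>\<^sup>+q. ennreal (indicator ({0..} \<times> {0..}) q * g (fst q + snd q)) \<partial>lborel) \<le> ennreal (1 / m)"
      unfolding g_def by (rule nn_integral_quadrant_laplace_sum_le[OF p0 p_dist \<phi>_ge \<open>0 < m\<close> \<phi>_le])
  qed
  also have "\<dots> \<le> ennreal (4 / real n ^ 2 * (M / m))"
    using laplace_sum_weighted_0_le[OF p0 p_sum \<phi>_abs] laplace_sum_nonneg[OF weights0] \<open>0 < m\<close>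
    unfolding g_def p1 by (intro ennreal_leI) (simp add: divide_right_mono)
  finally show ?thesis .
qed

lemma Phi_beta_eq_laplace_sum:
  "Phi_beta pt pg r \<beta> x = laplace_sum (pg x) (phi_beta pt pg r \<beta> x)"
  by (simp add: fun_eq_iff Phi_beta_def laplace_sum_def)

lemma phi_beta_pos: "0 < pt x y \<Longrightarrow> 0 < pg x y \<Longrightarrow> 0 < phi_beta pt pg r \<beta> x y"
  by (simp add: phi_beta_def)

lemma phi_max_eq:
  assumes "\<And>x y. phi_beta pt pg r \<beta> x y \<le> phi_beta pt pg r \<beta> xM yM"
  shows "phi_max pt pg r \<beta> = phi_beta pt pg r \<beta> xM yM"
  unfolding phi_max_def
  by (rule cSup_eq_maximum) (use assms in \<open>auto intro: image_eqI[of _ _ "(xM, yM)"]\<close>)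

lemma phi_min_eq:
  assumes "\<And>x y. phi_beta pt pg r \<beta> xm ym \<le> phi_beta pt pg r \<beta> x y"
  shows "phi_min pt pg r \<beta> = phi_beta pt pg r \<beta> xm ym"
  unfolding phi_min_def
  by (rule cInf_eq_minimum) (use assms in \<open>auto intro: image_eqI[of _ _ "(xm, ym)"]\<close>)

theorem lemmaD4:
  fixes pt pg r :: "'x \<Rightarrow> 'y::countable \<Rightarrow> real"
    and \<beta> :: real and n :: nat and x :: 'x
  assumes pt_pos: "\<And>x y. pt x y > 0"
    and pg_pos: "\<And>x y. pg x y > 0"
    and pt_dist: "\<And>x. (pt x has_sum 1) UNIV"
    and pg_dist: "\<And>x. (pg x has_sum 1) UNIV"
    and beta_pos: "\<beta> > 0"
    and n_ge: "n \<ge> 1"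
    and max_ex: "\<exists>xm ym. \<forall>x' y'. phi_beta pt pg r \<beta> x' y' \<le> phi_beta pt pg r \<beta> xm ym"
    and min_ex: "\<exists>xm ym. \<forall>x' y'. phi_beta pt pg r \<beta> xm ym \<le> phi_beta pt pg r \<beta> x' y'"
  shows "I1 (Phi_beta pt pg r \<beta> x) n
           \<le> ennreal (4 / real n ^ 2 * (phi_max pt pg r \<beta> / phi_min pt pg r \<beta>))"
proof -
  obtain xM yM where max: "\<And>x' y'. phi_beta pt pg r \<beta> x' y' \<le> phi_beta pt pg r \<beta> xM yM"
    using max_ex by blast
  obtain xm ym where min: "\<And>x' y'. phi_beta pt pg r \<beta> xm ym \<le> phi_beta pt pg r \<beta> x' y'"
    using min_ex by blast
  have "I1 (laplace_sum (pg x) (phi_beta pt pg r \<beta> x)) n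
      \<le> ennreal (4 / real n ^ 2 * (phi_beta pt pg r \<beta> xM yM / phi_beta pt pg r \<beta> xm ym))"
    by (rule I1_laplace_sum_le[OF n_ge])
      (auto intro: less_imp_le phi_beta_pos pt_pos pg_pos pg_dist max min)
  then show ?thesis
    unfolding Phi_beta_eq_laplace_sum phi_max_eq[OF max] phi_min_eq[OF min] .
qed

end
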